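(* Let $\alpha>0$, $0<p<1$, and for $j=1,\dots,n$ let $(X_{j1},X_{j2})\sim BDEW(\alpha,p,\beta_{j1},\beta_{j2},\beta_{j3})$ with $\beta_{j1},\beta_{j2},\beta_{j3}>0$, the pairs $(X_{j1},X_{j2})$, $j=1,\dots,n$, being independent. Let $Z_1=\max\{X_{11},\dots,X_{n1}\}$ and $Z_2=\max\{X_{12},\dots,X_{n2}\}$. Then $$(Z_1,Z_2)\sim BDEW\Big(\alpha,p,\sum_{j=1}^n\beta_{j1},\sum_{j=1}^n\beta_{j2},\sum_{j=1}^n\beta_{j3}\Big).$$
   Context: The exponentiated discrete Weibull distribution $EDW(\alpha,p,\beta)$ ($\alpha,\beta>0$, $0<p<1$) is the distribution on $\mathbb{N}_0=\{0,1,2,\dots\}$ with cumulative distribution function $F_{EDW}(x;\alpha,p,\beta)=[1-p^{([x]+1)^{\alpha}}]^{\beta}$ for real $x\ge 0$, where $[x]$ is the largest integer $\le x$. The bivariate discrete exponentiated Weibull distribution $BDEW(\alpha,p,\beta_1,\beta_2,\beta_3)$ is the distribution of $(\max\{V_1,V_3\},\max\{V_2,V_3\})$ where $V_1,V_2,V_3$ are independent with $V_i\sim EDW(\alpha,p,\beta_i)$; equivalently it has joint CDF $F(x_1,x_2)=[1-p^{(x_1+1)^{\alpha}}]^{\beta_1}[1-p^{(x_2+1)^{\alpha}}]^{\beta_2}[1-p^{(\min\{x_1,x_2\}+1)^{\alpha}}]^{\beta_3}$ for $x_1,x_2\in\mathbb{N}_0$. *)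

theory Defs
  imports "HOL-Probability.Probability"
begin

definition edw_cdf :: "real \<Rightarrow> real \<Rightarrow> real \<Rightarrow> nat \<Rightarrow> real" where
  "edw_cdf \<alpha> p \<beta> x = (1 - p powr ((real x + 1) powr \<alpha>)) powr \<beta>"

definition bdew_cdf :: "real \<Rightarrow> real \<Rightarrow> real \<Rightarrow> real \<Rightarrow> real \<Rightarrow> nat \<Rightarrow> nat \<Rightarrow> real" where
  "bdew_cdf \<alpha> p \<beta>1 \<beta>2 \<beta>3 x1 x2 =
     edw_cdf \<alpha> p \<beta>1 x1 * edw_cdf \<alpha> p \<beta>2 x2 * edw_cdf \<alpha> p \<beta>3 (min x1 x2)"

text \<open>A random pair Y (with values in N_0 x N_0) on M has the BDEW distribution:
  it is a random variable and its joint CDF is the BDEW joint CDF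
  (a distribution on N_0^2 is determined by its joint CDF).\<close>
definition has_bdew ::
  "'a measure \<Rightarrow> ('a \<Rightarrow> nat \<times> nat) \<Rightarrow> real \<Rightarrow> real \<Rightarrow> real \<Rightarrow> real \<Rightarrow> real \<Rightarrow> bool" where
  "has_bdew M Y \<alpha> p \<beta>1 \<beta>2 \<beta>3 \<longleftrightarrow>
     Y \<in> measurable M (count_space UNIV) \<and>
     (\<forall>x1 x2. measure M {\<omega> \<in> space M. fst (Y \<omega>) \<le> x1 \<and> snd (Y \<omega>) \<le> x2}
                = bdew_cdf \<alpha> p \<beta>1 \<beta>2 \<beta>3 x1 x2)"

end

(* (Z1, Z2) lies below (x1, x2) exactly when every pair (X_j1, X_j2) does, so by independence
   its joint CDF is the product of the BDEW joint CDFs. Each factor is a product of powers of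
   the bases 1 - p^((x+1)^alpha), and multiplying powers of a common positive base adds the
   exponents beta. *)
theory Submission
  imports Defs
begin

lemma edw_cdf_base_pos:
  fixes p :: real
  assumes "0 < p" "p < 1"
  shows "0 < 1 - p powr ((real x + 1) powr \<alpha>)"
proof -
  have "p powr ((real x + 1) powr \<alpha>) < 1 powr ((real x + 1) powr \<alpha>)"
    using assms by (intro powr_less_mono2) auto
  then show ?thesis by simp
qed

lemma edw_cdf_prod:
  assumes "0 < p" "p < 1"
  shows "(\<Prod>j\<in>I. edw_cdf \<alpha> p (\<beta> j) x) = edw_cdf \<alpha> p (\<Sum>j\<in>I. \<beta> j) x"
  unfolding edw_cdf_def
  using powr_sum[of "1 - p powr ((real x + 1) powr \<alpha>)" \<beta> I] edw_cdf_base_pos[OF assms, of x \<alpha>]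
  by simp

lemma bdew_cdf_prod:
  assumes "0 < p" "p < 1"
  shows "(\<Prod>j\<in>I. bdew_cdf \<alpha> p (\<beta>1 j) (\<beta>2 j) (\<beta>3 j) x1 x2)
           = bdew_cdf \<alpha> p (\<Sum>j\<in>I. \<beta>1 j) (\<Sum>j\<in>I. \<beta>2 j) (\<Sum>j\<in>I. \<beta>3 j) x1 x2"
  unfolding bdew_cdf_def prod.distrib edw_cdf_prod[OF assms] ..

lemma measurable_Max_count_space:
  fixes f :: "'i \<Rightarrow> 'a \<Rightarrow> 'b::{countable, linorder}"
  assumes "finite I" "I \<noteq> {}"
    and [measurable]: "\<And>i. i \<in> I \<Longrightarrow> f i \<in> measurable M (count_space UNIV)"
  shows "(\<lambda>\<omega>. Max ((\<lambda>i. f i \<omega>) ` I)) \<in> measurable M (count_space UNIV)"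
  unfolding measurable_count_space_eq2_countable
proof (intro conjI ballI)
  fix a :: 'b
  have "Max ((\<lambda>i. f i \<omega>) ` I) = a \<longleftrightarrow> (\<forall>i\<in>I. f i \<omega> \<le> a) \<and> (\<exists>i\<in>I. f i \<omega> = a)" for \<omega>
    using assms(1,2) by (auto simp: Max_eq_iff)
  then have "(\<lambda>\<omega>. Max ((\<lambda>i. f i \<omega>) ` I)) -` {a} \<inter> space M
          = {\<omega> \<in> space M. (\<forall>i\<in>I. f i \<omega> \<le> a) \<and> (\<exists>i\<in>I. f i \<omega> = a)}"
    by blast
  also have "\<dots> \<in> sets M" using assms(1) by measurable
  finally show "(\<lambda>\<omega>. Max ((\<lambda>i. f i \<omega>) ` I)) -` {a} \<inter> space M \<in> sets M" .
qed simp

lemma (in prob_space) prob_Max_le_indep_pairs: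
  fixes X :: "'i \<Rightarrow> 'a \<Rightarrow> 'b::linorder \<times> 'c::linorder"
  assumes "indep_vars (\<lambda>_. count_space UNIV) X I" "I \<noteq> {}" "finite I"
  shows "prob {\<omega> \<in> space M. Max ((\<lambda>j. fst (X j \<omega>)) ` I) \<le> x1 \<and> Max ((\<lambda>j. snd (X j \<omega>)) ` I) \<le> x2}
           = (\<Prod>j\<in>I. prob {\<omega> \<in> space M. fst (X j \<omega>) \<le> x1 \<and> snd (X j \<omega>) \<le> x2})"
proof -
  let ?A = "{ab. fst ab \<le> x1 \<and> snd ab \<le> x2}"
  have "{\<omega> \<in> space M. Max ((\<lambda>j. fst (X j \<omega>)) ` I) \<le> x1 \<and> Max ((\<lambda>j. snd (X j \<omega>)) ` I) \<le> x2}
          = (\<Inter>j\<in>I. X j -` ?A \<inter> space M)"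
    using assms(2,3) by auto
  also have "prob \<dots> = (\<Prod>j\<in>I. prob (X j -` ?A \<inter> space M))"
    by (rule indep_varsD_finite[OF assms]) simp
  also have "\<dots> = (\<Prod>j\<in>I. prob {\<omega> \<in> space M. fst (X j \<omega>) \<le> x1 \<and> snd (X j \<omega>) \<le> x2})"
    by (intro prod.cong refl arg_cong[where f = prob]) auto
  finally show ?thesis .
qed

theorem mainTheorem6:
  fixes M :: "'a measure" and X :: "nat \<Rightarrow> 'a \<Rightarrow> nat \<times> nat"
    and \<alpha> p :: real and \<beta>1 \<beta>2 \<beta>3 :: "nat \<Rightarrow> real" and n :: nat
  assumes "prob_space M"
    and "n \<ge> 1"
    and "\<alpha> > 0" and "0 < p" and "p < 1"
    and "\<And>j. j \<in> {1..n} \<Longrightarrow> \<beta>1 j > 0 \<and> \<beta>2 j > 0 \<and> \<beta>3 j > 0"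
    and "\<And>j. j \<in> {1..n} \<Longrightarrow> has_bdew M (X j) \<alpha> p (\<beta>1 j) (\<beta>2 j) (\<beta>3 j)"
    and "prob_space.indep_vars M (\<lambda>_. count_space UNIV) X {1..n}"
  shows "has_bdew M
           (\<lambda>\<omega>. (Max ((\<lambda>j. fst (X j \<omega>)) ` {1..n}), Max ((\<lambda>j. snd (X j \<omega>)) ` {1..n})))
           \<alpha> p (\<Sum>j=1..n. \<beta>1 j) (\<Sum>j=1..n. \<beta>2 j) (\<Sum>j=1..n. \<beta>3 j)"
proof -
  interpret prob_space M by fact
  have index_set: "{1..n} \<noteq> {}" "finite {1..n}" using \<open>n \<ge> 1\<close> by auto
  have "X j \<in> measurable M (count_space UNIV)" if "j \<in> {1..n}" for j
    using assms(7)[OF that] unfolding has_bdew_def by blast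
  then have "(\<lambda>\<omega>. fst (X j \<omega>)) \<in> measurable M (count_space UNIV)"
    and "(\<lambda>\<omega>. snd (X j \<omega>)) \<in> measurable M (count_space UNIV)" if "j \<in> {1..n}" for j
    using that by (auto intro: measurable_compose[OF _ measurable_count_space])
  then have "(\<lambda>\<omega>. (Max ((\<lambda>j. fst (X j \<omega>)) ` {1..n}), Max ((\<lambda>j. snd (X j \<omega>)) ` {1..n})))
          \<in> measurable M (count_space UNIV \<Otimes>\<^sub>M count_space UNIV)"
    by (intro measurable_Pair measurable_Max_count_space index_set)
  moreover have "prob {\<omega> \<in> space M. Max ((\<lambda>j. fst (X j \<omega>)) ` {1..n}) \<le> x1
                                    \<and> Max ((\<lambda>j. snd (X j \<omega>)) ` {1..n}) \<le> x2}
        = bdew_cdf \<alpha> p (\<Sum>j=1..n. \<beta>1 j) (\<Sum>j=1..n. \<beta>2 j) (\<Sum>j=1..n. \<beta>3 j) x1 x2" for x1 x2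
    using assms(7) unfolding prob_Max_le_indep_pairs[OF assms(8) index_set]
      bdew_cdf_prod[OF \<open>0 < p\<close> \<open>p < 1\<close>, symmetric] has_bdew_def
    by (intro prod.cong) auto
  ultimately show ?thesis
    unfolding has_bdew_def by (simp add: pair_measure_countable)
qed

end
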